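(* Let $S,T$ be left semi-braces whose associated maps $r_S$ and $r_T$ are solutions. Let $\sigma:T\to\mathrm{Aut}(S)$ be a homomorphism from $(T,\cdot)$ into the automorphism group of $(S,+,\cdot)$ (write ${}^ua=\sigma(u)(a)$), and $\delta:S\to\mathrm{End}(T)$ an anti-homomorphism from $(S,+)$ into the endomorphism semigroup of $(T,+)$ (write $u^a=\delta(a)(u)$) with $(uv)^{\lambda_a({}^ub)}+u((u^{-1})^b+w)=u(v^b+w)$ for all $a,b\in S$, $u,v,w\in T$; let $B$ be the double semidirect product $S\times T$ with $(a,u)+(b,v)=(a+b,u^b+v)$, $(a,u)(b,v)=(a\,{}^ub,uv)$. If (1) $(u^{1})^a=u^a$ and (2) $1^a+u=1+u$ for all $a\in S$ and $u\in T$ (where in (1) $1$ is the identity of $(S,\cdot)$ and in (2) $1$ is the identity of $(T,\cdot)$), then the map $r_B$ associated to $B$ is a solution.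
   Context: A left semi-brace is a triple $(S,+,\cdot)$ such that $(S,+)$ is a semigroup, $(S,\cdot)$ is a group with identity $1$, and $a(b+c)=ab+a(a^{-1}+c)$ for all $a,b,c$. Set $\lambda_a(b)=a(a^{-1}+b)$, $\rho_b(a)=(a^{-1}+b)^{-1}b$; the map associated to $X$ is $r_X(x,y)=(\lambda_x(y),\rho_y(x))$. A solution is a map $r:X\times X\to X\times X$ with $(r\times\mathrm{id})(\mathrm{id}\times r)(r\times\mathrm{id})=(\mathrm{id}\times r)(r\times\mathrm{id})(\mathrm{id}\times r)$. An automorphism of $(S,+,\cdot)$ is a bijection preserving both operations. That $\delta$ is an anti-homomorphism from $(S,+)$ means $u^{a+b}=(u^a)^b$. *)

theory Defs
  imports Main
begin

(* A structure is given by operations on a whole type (carrier = UNIV). *)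

definition is_semigroup :: "('a \<Rightarrow> 'a \<Rightarrow> 'a) \<Rightarrow> bool" where
  "is_semigroup add \<longleftrightarrow> (\<forall>a b c. add (add a b) c = add a (add b c))"

definition is_group :: "('a \<Rightarrow> 'a \<Rightarrow> 'a) \<Rightarrow> 'a \<Rightarrow> bool" where
  "is_group mult one \<longleftrightarrow>
     (\<forall>a b c. mult (mult a b) c = mult a (mult b c)) \<and>
     (\<forall>a. mult one a = a \<and> mult a one = a) \<and>
     (\<forall>a. \<exists>b. mult a b = one \<and> mult b a = one)"

definition ginv :: "('a \<Rightarrow> 'a \<Rightarrow> 'a) \<Rightarrow> 'a \<Rightarrow> 'a \<Rightarrow> 'a" where
  "ginv mult one a = (THE b. mult a b = one \<and> mult b a = one)"

definition left_semi_brace :: "('a \<Rightarrow> 'a \<Rightarrow> 'a) \<Rightarrow> ('a \<Rightarrow> 'a \<Rightarrow> 'a) \<Rightarrow> 'a \<Rightarrow> bool" where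
  "left_semi_brace add mult one \<longleftrightarrow>
     is_semigroup add \<and> is_group mult one \<and>
     (\<forall>a b c. mult a (add b c) = add (mult a b) (mult a (add (ginv mult one a) c)))"

definition lam :: "('a \<Rightarrow> 'a \<Rightarrow> 'a) \<Rightarrow> ('a \<Rightarrow> 'a \<Rightarrow> 'a) \<Rightarrow> 'a \<Rightarrow> 'a \<Rightarrow> 'a \<Rightarrow> 'a" where
  "lam add mult one a b = mult a (add (ginv mult one a) b)"

definition rho :: "('a \<Rightarrow> 'a \<Rightarrow> 'a) \<Rightarrow> ('a \<Rightarrow> 'a \<Rightarrow> 'a) \<Rightarrow> 'a \<Rightarrow> 'a \<Rightarrow> 'a \<Rightarrow> 'a" where
  "rho add mult one b a = mult (ginv mult one (add (ginv mult one a) b)) b"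

definition assoc_map :: "('a \<Rightarrow> 'a \<Rightarrow> 'a) \<Rightarrow> ('a \<Rightarrow> 'a \<Rightarrow> 'a) \<Rightarrow> 'a \<Rightarrow> 'a \<times> 'a \<Rightarrow> 'a \<times> 'a" where
  "assoc_map add mult one = (\<lambda>(x, y). (lam add mult one x y, rho add mult one y x))"

definition r12 :: "('a \<times> 'a \<Rightarrow> 'a \<times> 'a) \<Rightarrow> 'a \<times> 'a \<times> 'a \<Rightarrow> 'a \<times> 'a \<times> 'a" where
  "r12 r = (\<lambda>(x, y, z). let (p, q) = r (x, y) in (p, q, z))"

definition r23 :: "('a \<times> 'a \<Rightarrow> 'a \<times> 'a) \<Rightarrow> 'a \<times> 'a \<times> 'a \<Rightarrow> 'a \<times> 'a \<times> 'a" where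
  "r23 r = (\<lambda>(x, y, z). let (p, q) = r (y, z) in (x, p, q))"

definition is_solution :: "('a \<times> 'a \<Rightarrow> 'a \<times> 'a) \<Rightarrow> bool" where
  "is_solution r \<longleftrightarrow> r12 r \<circ> r23 r \<circ> r12 r = r23 r \<circ> r12 r \<circ> r23 r"

definition dsp_add :: "('a \<Rightarrow> 'a \<Rightarrow> 'a) \<Rightarrow> ('b \<Rightarrow> 'b \<Rightarrow> 'b) \<Rightarrow> ('a \<Rightarrow> 'b \<Rightarrow> 'b)
    \<Rightarrow> 'a \<times> 'b \<Rightarrow> 'a \<times> 'b \<Rightarrow> 'a \<times> 'b" where
  "dsp_add addS addT \<delta> = (\<lambda>(a, u) (b, v). (addS a b, addT (\<delta> b u) v))"

definition dsp_mult :: "('a \<Rightarrow> 'a \<Rightarrow> 'a) \<Rightarrow> ('b \<Rightarrow> 'b \<Rightarrow> 'b) \<Rightarrow> ('b \<Rightarrow> 'a \<Rightarrow> 'a)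
    \<Rightarrow> 'a \<times> 'b \<Rightarrow> 'a \<times> 'b \<Rightarrow> 'a \<times> 'b" where
  "dsp_mult multS multT \<sigma> = (\<lambda>(a, u) (b, v). (multS a (\<sigma> u b), multT u v))"

end

theory Submission
  imports Defs
begin

text \<open>
  Comparing inverses of the third components of the braid relation shows that r_S is a
  solution iff 1 + y(1 + z) = lambda_y(z) (1 + rho_z(y)) for all y, z. Under this condition
  t (1 + t^-) does not change when t is replaced by t + a; since every c with 1 + c = c can
  be written as x (x^- + lambda_{x^-}(c)), this gives c (1 + c^- x) = 1 + x for such c, in
  particular for c = lambda_y(z). Hence r_S is a solution iff 1 + y(1 + z) = 1 + yz. In the
  double semidirect product B this identity holds componentwise once 1^a + u = 1 + u, and
  the compatibility axiom is exactly what makes B a left semi-brace.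
\<close>

lemma ginv_unique:
  assumes G: "is_group mult one" and "mult a b = one" and "mult b a = one"
  shows "ginv mult one a = b"
  unfolding ginv_def
proof (rule the_equality)
  fix c assume c: "mult a c = one \<and> mult c a = one"
  have "c = mult c (mult a b)" using G assms(2) by (simp add: is_group_def)
  also have "\<dots> = mult (mult c a) b" using G by (simp add: is_group_def)
  also have "\<dots> = b" using G c by (simp add: is_group_def)
  finally show "c = b" .
qed (use assms in simp)

lemma ginv_inverse:
  assumes G: "is_group mult one"
  shows "mult a (ginv mult one a) = one" and "mult (ginv mult one a) a = one"
proof -
  obtain b where "mult a b = one" "mult b a = one"
    using G unfolding is_group_def by blast
  with ginv_unique[OF G] show "mult a (ginv mult one a) = one" "mult (ginv mult one a) a = one"
    by auto
qed

locale semibrace =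
  fixes add :: "'a \<Rightarrow> 'a \<Rightarrow> 'a" (infixl "\<oplus>" 65)
    and mult :: "'a \<Rightarrow> 'a \<Rightarrow> 'a" (infixl "\<cdot>" 70)
    and one :: 'a ("\<one>")
  assumes left_semi_brace: "left_semi_brace add mult one"
begin

abbreviation inverse_op :: "'a \<Rightarrow> 'a" ("_\<^sup>-" [1000] 1000)
  where "a\<^sup>- \<equiv> ginv mult one a"
abbreviation L where "L \<equiv> lam add mult one"
abbreviation R where "R \<equiv> rho add mult one"
abbreviation r where "r \<equiv> assoc_map add mult one"

lemma is_group: "is_group mult one"
  using left_semi_brace by (simp add: left_semi_brace_def)

lemma add_assoc: "a \<oplus> b \<oplus> c = a \<oplus> (b \<oplus> c)"
  using left_semi_brace by (simp add: left_semi_brace_def is_semigroup_def)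

lemma mult_assoc: "a \<cdot> b \<cdot> c = a \<cdot> (b \<cdot> c)"
  and mult_one_left [simp]: "\<one> \<cdot> a = a"
  and mult_one_right [simp]: "a \<cdot> \<one> = a"
  using is_group by (simp_all add: is_group_def)

lemma right_inverse [simp]: "a \<cdot> a\<^sup>- = \<one>"
  and left_inverse [simp]: "a\<^sup>- \<cdot> a = \<one>"
  using ginv_inverse[OF is_group] by simp_all

lemma inverse_unique: "a \<cdot> b = \<one> \<Longrightarrow> a\<^sup>- = b"
  by (metis left_inverse mult_assoc mult_one_left mult_one_right)

lemma mult_inverse_cancel_left [simp]: "a \<cdot> (a\<^sup>- \<cdot> b) = b"
  and inverse_mult_cancel_left [simp]: "a\<^sup>- \<cdot> (a \<cdot> b) = b"
  by (simp_all flip: mult_assoc)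

lemma inverse_inverse [simp]: "a\<^sup>-\<^sup>- = a"
  and inverse_one [simp]: "\<one>\<^sup>- = \<one>"
  and inverse_mult: "(a \<cdot> b)\<^sup>- = b\<^sup>- \<cdot> a\<^sup>-"
  by (rule inverse_unique; simp add: mult_assoc)+

lemma mult_left_cancel: "a \<cdot> b = a \<cdot> c \<longleftrightarrow> b = c"
  by (metis inverse_mult_cancel_left)

lemma mult_right_cancel: "b \<cdot> a = c \<cdot> a \<longleftrightarrow> b = c"
  by (metis mult_assoc right_inverse mult_one_right)

lemma L_def: "L a b = a \<cdot> (a\<^sup>- \<oplus> b)"
  by (simp add: lam_def)

lemma R_def: "R b a = (a\<^sup>- \<oplus> b)\<^sup>- \<cdot> b"
  by (simp add: rho_def)

lemma mult_add: "a \<cdot> (b \<oplus> c) = a \<cdot> b \<oplus> L a c"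
  using left_semi_brace unfolding left_semi_brace_def lam_def by blast

lemma mult_one_add: "a \<cdot> (\<one> \<oplus> b) = a \<oplus> L a b"
  using mult_add[of a \<one> b] by simp

lemma add_eq_mult_L: "a \<oplus> b = a \<cdot> L a\<^sup>- b"
  by (simp add: L_def)

lemma L_add: "L a (b \<oplus> c) = L a b \<oplus> L a c"
  using mult_add[of a "a\<^sup>- \<oplus> b" c] by (simp add: L_def add_assoc)

lemma L_mult: "L (a \<cdot> b) c = L a (L b c)"
proof -
  have "b \<cdot> (b\<^sup>- \<cdot> a\<^sup>- \<oplus> c) = a\<^sup>- \<oplus> L b c"
    using mult_add[of b "b\<^sup>- \<cdot> a\<^sup>-" c] by simp
  then show ?thesis
    by (simp add: L_def inverse_mult mult_assoc)
qed

lemma L_one: "L \<one> a = \<one> \<oplus> a"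
  by (simp add: L_def)

lemma L_L_inverse: "L a (L a\<^sup>- b) = \<one> \<oplus> b"
  by (simp flip: L_mult add: L_one)

lemma L_inverse_L: "L a\<^sup>- (L a b) = \<one> \<oplus> b"
  using L_L_inverse[of "a\<^sup>-"] by simp

lemma one_add_L: "\<one> \<oplus> L a b = L a b"
  by (metis L_mult L_one mult_one_left)

lemma add_one_add: "a \<oplus> (\<one> \<oplus> b) = a \<oplus> b"
  by (metis add_eq_mult_L L_mult L_one mult_one_right)

lemma L_one_add: "L a \<one> \<oplus> b = \<one> \<oplus> b"
proof -
  have "L a \<one> \<oplus> b = L a \<one> \<oplus> L a (L a\<^sup>- b)"
    by (simp add: L_L_inverse add_one_add)
  also have "\<dots> = L a (L a\<^sup>- b)"
    by (simp add: one_add_L flip: L_add)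
  finally show ?thesis
    by (simp add: L_L_inverse)
qed

lemma L_eq_L_one: "\<one> \<oplus> k = \<one> \<Longrightarrow> L a k = L a \<one>"
  by (metis L_mult L_one mult_one_right)

lemma one_add_mult_one_add_absorb:
  "\<one> \<oplus> c = c \<Longrightarrow> \<one> \<oplus> c \<cdot> (\<one> \<oplus> b) = c \<cdot> (\<one> \<oplus> b)"
proof -
  assume c: "\<one> \<oplus> c = c"
  have "\<one> \<oplus> (c \<oplus> L c b) = c \<oplus> L c b"
    by (simp only: c flip: add_assoc)
  then show ?thesis
    by (simp only: mult_one_add)
qed

lemma L_mult_R: "L a b \<cdot> R b a = a \<cdot> b"
  by (simp add: L_def R_def mult_assoc)

lemma R_eq: "R b a = (L a b)\<^sup>- \<cdot> (a \<cdot> b)"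
  by (metis L_mult_R inverse_mult_cancel_left)

lemma L_mult_R_assoc: "L a b \<cdot> (R b a \<cdot> c) = a \<cdot> (b \<cdot> c)"
  by (simp flip: mult_assoc add: L_mult_R)

lemma inverse_R: "(R b a)\<^sup>- = b\<^sup>- \<cdot> (a\<^sup>- \<oplus> b)"
  by (simp add: R_def inverse_mult)

lemma inverse_R_R: "(R z (R y x))\<^sup>- = (y \<cdot> z)\<^sup>- \<cdot> (x\<^sup>- \<oplus> y \<cdot> (\<one> \<oplus> z))"
proof -
  have "y\<^sup>- \<cdot> (x\<^sup>- \<oplus> y \<cdot> (\<one> \<oplus> z)) = y\<^sup>- \<cdot> (x\<^sup>- \<oplus> y) \<oplus> z"
    by (simp add: mult_one_add mult_add L_add L_inverse_L add_one_add add_assoc)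
  then show ?thesis
    by (simp add: inverse_R inverse_mult mult_assoc)
qed

lemma braid_sides:
  "(r12 r \<circ> r23 r \<circ> r12 r) (x, y, z)
    = (L (L x y) (L (R y x) z), R (L (R y x) z) (L x y), R z (R y x))"
  "(r23 r \<circ> r12 r \<circ> r23 r) (x, y, z)
    = (L x (L y z), L (R (L y z) x) (R z y), R (R z y) (R (L y z) x))"
  by (simp_all add: r12_def r23_def assoc_map_def)

lemma R_R_eq_iff:
  "R z (R y x) = R (R z y) (R (L y z) x) \<longleftrightarrow>
   x\<^sup>- \<oplus> y \<cdot> (\<one> \<oplus> z) = x\<^sup>- \<oplus> L y z \<cdot> (\<one> \<oplus> R z y)"
proof -
  have "R z (R y x) = R (R z y) (R (L y z) x) \<longleftrightarrow>
        (R z (R y x))\<^sup>- = (R (R z y) (R (L y z) x))\<^sup>-"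
    by (metis inverse_inverse)
  also have "\<dots> \<longleftrightarrow> x\<^sup>- \<oplus> y \<cdot> (\<one> \<oplus> z) = x\<^sup>- \<oplus> L y z \<cdot> (\<one> \<oplus> R z y)"
    by (simp only: inverse_R_R L_mult_R mult_left_cancel)
  finally show ?thesis .
qed

lemma is_solution_iff_braid_condition:
  "is_solution r \<longleftrightarrow>
   (\<forall>y z. \<one> \<oplus> y \<cdot> (\<one> \<oplus> z) = L y z \<cdot> (\<one> \<oplus> R z y))"
proof
  assume "is_solution r"
  then have "R z (R y \<one>) = R (R z y) (R (L y z) \<one>)" for y z
    unfolding is_solution_def by (metis braid_sides prod.inject)
  then show "\<forall>y z. \<one> \<oplus> y \<cdot> (\<one> \<oplus> z) = L y z \<cdot> (\<one> \<oplus> R z y)"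
    by (simp add: R_R_eq_iff one_add_mult_one_add_absorb one_add_L)
next
  assume condition: "\<forall>y z. \<one> \<oplus> y \<cdot> (\<one> \<oplus> z) = L y z \<cdot> (\<one> \<oplus> R z y)"
  show "is_solution r"
    unfolding is_solution_def
  proof (rule ext, clarify)
    fix x y z
    have third: "R z (R y x) = R (R z y) (R (L y z) x)"
      unfolding R_R_eq_iff by (metis condition add_one_add)
    have first: "L (L x y) (L (R y x) z) = L x (L y z)"
      by (simp add: L_mult_R flip: L_mult)
    have "L (L x y) (L (R y x) z) \<cdot> R (L (R y x) z) (L x y) \<cdot> R z (R y x)
        = L x (L y z) \<cdot> L (R (L y z) x) (R z y) \<cdot> R (R z y) (R (L y z) x)"
      by (simp add: L_mult_R L_mult_R_assoc mult_assoc)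
    then have second: "R (L (R y x) z) (L x y) = L (R (L y z) x) (R z y)"
      by (simp add: first third mult_assoc mult_left_cancel mult_right_cancel)
    show "(r12 r \<circ> r23 r \<circ> r12 r) (x, y, z)
        = (r23 r \<circ> r12 r \<circ> r23 r) (x, y, z)"
      unfolding braid_sides first second third ..
  qed
qed

context
  assumes braid_condition: "\<And>y z. \<one> \<oplus> y \<cdot> (\<one> \<oplus> z) = L y z \<cdot> (\<one> \<oplus> R z y)"
begin

lemma one_add_inverse_one_add_mult: "\<one> \<oplus> (\<one> \<oplus> a)\<^sup>- \<cdot> a = \<one>"
proof -
  have "(\<one> \<oplus> a) \<cdot> \<one> = (\<one> \<oplus> a) \<cdot> (\<one> \<oplus> (\<one> \<oplus> a)\<^sup>- \<cdot> a)"
    using braid_condition[of \<one> a] by (simp add: R_eq L_one add_one_add)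
  then show ?thesis
    by (simp only: mult_left_cancel)
qed

lemma one_add_one: "\<one> \<oplus> \<one> = \<one>"
  by (metis add_one_add one_add_inverse_one_add_mult)

lemma add_L_one: "a \<oplus> L a \<one> = a"
  using mult_one_add[of a \<one>] by (simp add: one_add_one)

lemma mult_add_one: "a \<cdot> b \<oplus> \<one> = a \<cdot> (b \<oplus> L a\<^sup>- \<one>)"
  by (simp add: mult_add L_L_inverse one_add_one)

lemma L_one_eq_one: "a \<oplus> \<one> = a \<Longrightarrow> L a \<one> = \<one>"
proof -
  assume "a \<oplus> \<one> = a"
  then have "L a\<^sup>- \<one> = \<one>"
    by (metis add_eq_mult_L mult_left_cancel mult_one_right)
  then show ?thesis
    using L_L_inverse[of a \<one>] by (simp add: one_add_one)
qed

lemma one_add_inverse_mult_one_add: "\<one> \<oplus> a\<^sup>- \<cdot> (\<one> \<oplus> a) = \<one>"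
proof -
  define g where "g = a\<^sup>- \<cdot> (\<one> \<oplus> a)"
  have kernel: "\<one> \<oplus> g\<^sup>- = \<one>"
    using one_add_inverse_one_add_mult[of a] by (simp add: g_def inverse_mult)
  have "g \<oplus> \<one> = g"
    by (simp add: g_def mult_add_one add_assoc add_L_one)
  then have "L g g\<^sup>- = \<one>"
    using kernel by (simp add: L_eq_L_one L_one_eq_one)
  then show ?thesis
    using braid_condition[of g "g\<^sup>-"] by (simp add: kernel R_eq one_add_one g_def[symmetric])
qed

lemma L_inverse_add: "L a a\<^sup>- \<oplus> a = L a \<one>"
proof -
  have "L a (a\<^sup>- \<cdot> (\<one> \<oplus> a)) = L a \<one>"
    by (rule L_eq_L_one[OF one_add_inverse_mult_one_add])
  then show ?thesis
    by (simp add: mult_one_add L_add L_L_inverse add_one_add)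
qed

lemma mult_one_add_inverse_add: "t \<cdot> (\<one> \<oplus> t\<^sup>-) \<oplus> (t \<oplus> b) = t \<oplus> b"
proof -
  have "t \<cdot> (\<one> \<oplus> t\<^sup>-) \<oplus> (t \<oplus> b) = t \<oplus> (L t t\<^sup>- \<oplus> t \<oplus> b)"
    by (simp add: mult_one_add add_assoc)
  also have "\<dots> = t \<oplus> b"
    by (simp add: L_inverse_add L_one_add add_one_add)
  finally show ?thesis .
qed

lemma mult_one_add_inverse_add_one: "t \<cdot> (\<one> \<oplus> t\<^sup>-) \<oplus> \<one> = t \<cdot> (\<one> \<oplus> t\<^sup>-)"
  by (simp add: mult_add_one add_assoc add_L_one)

lemma mult_one_add_inverse_add_invariant:
  "(t \<oplus> a) \<cdot> (\<one> \<oplus> (t \<oplus> a)\<^sup>-) = t \<cdot> (\<one> \<oplus> t\<^sup>-)"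
proof -
  define s where "s = t \<oplus> a"
  have "t \<cdot> (\<one> \<oplus> t\<^sup>-) \<oplus> s \<cdot> (\<one> \<oplus> s\<^sup>-) = (t \<cdot> (\<one> \<oplus> t\<^sup>-) \<oplus> s) \<oplus> L s s\<^sup>-"
    by (simp only: mult_one_add[of s] add_assoc)
  also have "\<dots> = s \<cdot> (\<one> \<oplus> s\<^sup>-)"
    by (simp only: s_def mult_one_add_inverse_add mult_one_add[of "t \<oplus> a"])
  finally have "s \<cdot> (\<one> \<oplus> s\<^sup>-) = t \<cdot> (\<one> \<oplus> t\<^sup>-) \<oplus> (\<one> \<oplus> s \<cdot> (\<one> \<oplus> s\<^sup>-))"
    by (simp add: add_one_add)
  also have "\<dots> = t \<cdot> (\<one> \<oplus> t\<^sup>-)"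
    using one_add_inverse_mult_one_add[of "s\<^sup>-"] by (simp add: mult_one_add_inverse_add_one)
  finally show ?thesis
    by (simp only: s_def)
qed

lemma mult_one_add_inverse_mult: "\<one> \<oplus> c = c \<Longrightarrow> c \<cdot> (\<one> \<oplus> c\<^sup>- \<cdot> x) = \<one> \<oplus> x"
proof -
  assume c: "\<one> \<oplus> c = c"
  define s where "s = x\<^sup>- \<oplus> L x\<^sup>- c"
  have xs: "x \<cdot> s = c"
    using L_L_inverse[of x c] c by (simp add: s_def L_def)
  then have "c\<^sup>- \<cdot> x = s\<^sup>-"
    by (simp flip: xs add: inverse_mult mult_assoc)
  then have "c \<cdot> (\<one> \<oplus> c\<^sup>- \<cdot> x) = x \<cdot> (s \<cdot> (\<one> \<oplus> s\<^sup>-))"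
    by (simp flip: xs add: mult_assoc)
  also have "s \<cdot> (\<one> \<oplus> s\<^sup>-) = x\<^sup>- \<cdot> (\<one> \<oplus> x)"
    using mult_one_add_inverse_add_invariant[of "x\<^sup>-" "L x\<^sup>- c"] by (simp add: s_def)
  finally show ?thesis
    by simp
qed

lemma one_add_mult_one_add: "\<one> \<oplus> y \<cdot> (\<one> \<oplus> z) = \<one> \<oplus> y \<cdot> z"
  using braid_condition[of y z] by (simp add: R_eq one_add_L mult_one_add_inverse_mult)

end

theorem is_solution_iff:
  "is_solution r \<longleftrightarrow> (\<forall>y z. \<one> \<oplus> y \<cdot> (\<one> \<oplus> z) = \<one> \<oplus> y \<cdot> z)"
proof
  assume "is_solution r"
  then have "\<one> \<oplus> y \<cdot> (\<one> \<oplus> z) = L y z \<cdot> (\<one> \<oplus> R z y)" for y z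
    by (simp add: is_solution_iff_braid_condition)
  then show "\<forall>y z. \<one> \<oplus> y \<cdot> (\<one> \<oplus> z) = \<one> \<oplus> y \<cdot> z"
    using one_add_mult_one_add by blast
next
  assume identity: "\<forall>y z. \<one> \<oplus> y \<cdot> (\<one> \<oplus> z) = \<one> \<oplus> y \<cdot> z"
  have "\<one> \<oplus> y \<cdot> (\<one> \<oplus> z) = L y z \<cdot> (\<one> \<oplus> R z y)" for y z
  proof -
    have "\<one> \<oplus> y \<cdot> (\<one> \<oplus> z) = \<one> \<oplus> L y z \<cdot> (\<one> \<oplus> R z y)"
      using identity by (simp add: L_mult_R)
    also have "\<dots> = L y z \<cdot> (\<one> \<oplus> R z y)"
      by (simp add: one_add_mult_one_add_absorb one_add_L)
    finally show ?thesis .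
  qed
  then show "is_solution r"
    by (simp add: is_solution_iff_braid_condition)
qed

end

locale double_semidirect_product =
  S: semibrace addS multS oneS + T: semibrace addT multT oneT
  for addS multS :: "'a \<Rightarrow> 'a \<Rightarrow> 'a" and oneS :: 'a
    and addT multT :: "'b \<Rightarrow> 'b \<Rightarrow> 'b" and oneT :: 'b +
  fixes \<sigma> :: "'b \<Rightarrow> 'a \<Rightarrow> 'a" and \<delta> :: "'a \<Rightarrow> 'b \<Rightarrow> 'b"
  assumes \<sigma>_bij: "bij (\<sigma> u)"
    and \<sigma>_add: "\<sigma> u (addS a b) = addS (\<sigma> u a) (\<sigma> u b)"
    and \<sigma>_mult: "\<sigma> u (multS a b) = multS (\<sigma> u a) (\<sigma> u b)"
    and \<sigma>_hom: "\<sigma> (multT u v) = \<sigma> u \<circ> \<sigma> v"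
    and \<delta>_add: "\<delta> a (addT u v) = addT (\<delta> a u) (\<delta> a v)"
    and \<delta>_antihom: "\<delta> (addS a b) u = \<delta> b (\<delta> a u)"
    and compat: "addT (\<delta> (lam addS multS oneS a (\<sigma> u b)) (multT u v))
                   (multT u (addT (\<delta> b (ginv multT oneT u)) w))
                 = multT u (addT (\<delta> b v) w)"
begin

abbreviation addB where "addB \<equiv> dsp_add addS addT \<delta>"
abbreviation multB where "multB \<equiv> dsp_mult multS multT \<sigma>"

lemma addB: "addB (a, u) (b, v) = (addS a b, addT (\<delta> b u) v)"
  by (simp add: dsp_add_def)

lemma multB: "multB (a, u) (b, v) = (multS a (\<sigma> u b), multT u v)"
  by (simp add: dsp_mult_def)

lemma \<sigma>_mult_apply: "\<sigma> (multT u v) a = \<sigma> u (\<sigma> v a)"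
  by (simp add: \<sigma>_hom)

lemma \<sigma>_one: "\<sigma> oneT a = a"
proof -
  have "\<sigma> oneT (\<sigma> oneT a) = \<sigma> oneT a"
    using \<sigma>_mult_apply[of oneT oneT a] by simp
  then show ?thesis
    using bij_is_inj[OF \<sigma>_bij] by (simp add: inj_eq)
qed

lemma \<sigma>_apply_one: "\<sigma> u oneS = oneS"
proof -
  have "multS (\<sigma> u oneS) (\<sigma> u oneS) = multS (\<sigma> u oneS) oneS"
    using \<sigma>_mult[of u oneS oneS] by simp
  then show ?thesis
    by (simp only: S.mult_left_cancel)
qed

lemma \<sigma>_inverse_cancel: "\<sigma> u (\<sigma> (ginv multT oneT u) a) = a"
  and \<sigma>_cancel_inverse: "\<sigma> (ginv multT oneT u) (\<sigma> u a) = a"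
  by (simp_all flip: \<sigma>_mult_apply add: \<sigma>_one)

lemma is_group_B: "is_group multB (oneS, oneT)"
  unfolding is_group_def
proof (intro conjI allI)
  fix x :: "'a \<times> 'b"
  obtain a u where x: "x = (a, u)" by fastforce
  let ?y = "(\<sigma> (ginv multT oneT u) (ginv multS oneS a), ginv multT oneT u)"
  have "multB x ?y = (oneS, oneT)" "multB ?y x = (oneS, oneT)"
    by (simp_all add: x multB \<sigma>_inverse_cancel \<sigma>_apply_one flip: \<sigma>_mult)
  then show "\<exists>y. multB x y = (oneS, oneT) \<and> multB y x = (oneS, oneT)"
    by blast
qed (auto simp: multB \<sigma>_mult \<sigma>_mult_apply \<sigma>_one \<sigma>_apply_one S.mult_assoc T.mult_assoc)

lemma inverse_B:
  "ginv multB (oneS, oneT) (a, u) = (\<sigma> (ginv multT oneT u) (ginv multS oneS a), ginv multT oneT u)"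
  by (rule ginv_unique[OF is_group_B])
    (simp_all add: multB \<sigma>_inverse_cancel \<sigma>_apply_one flip: \<sigma>_mult)

lemma left_semi_brace_B: "left_semi_brace addB multB (oneS, oneT)"
  unfolding left_semi_brace_def
proof (intro conjI allI)
  show "is_semigroup addB"
    by (auto simp: is_semigroup_def addB S.add_assoc T.add_assoc \<delta>_add \<delta>_antihom)
  show "is_group multB (oneS, oneT)"
    by (rule is_group_B)
  fix x y z :: "'a \<times> 'b"
  obtain a u b v c w where xyz: "x = (a, u)" "y = (b, v)" "z = (c, w)"
    by (metis surj_pair)
  have "multS a (\<sigma> u (addS (\<sigma> (ginv multT oneT u) (ginv multS oneS a)) c))
        = lam addS multS oneS a (\<sigma> u c)"
    by (simp add: \<sigma>_add \<sigma>_inverse_cancel S.L_def)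
  then show "multB x (addB y z) = addB (multB x y) (multB x (addB (ginv multB (oneS, oneT) x) z))"
    by (simp add: xyz inverse_B addB multB compat \<sigma>_add S.mult_add)
qed

lemma one_add_mult_one_add_B:
  assumes identity_S: "\<And>b c. addS oneS (multS b (addS oneS c)) = addS oneS (multS b c)"
    and identity_T: "\<And>u v. addT oneT (multT u (addT oneT v)) = addT oneT (multT u v)"
    and \<delta>_one: "\<And>a u. addT (\<delta> a oneT) u = addT oneT u"
  shows "addB (oneS, oneT) (multB y (addB (oneS, oneT) z)) = addB (oneS, oneT) (multB y z)"
proof -
  obtain b u c v where "y = (b, u)" "z = (c, v)"
    by (metis surj_pair)
  then show ?thesis
    by (simp add: addB multB \<sigma>_add \<sigma>_apply_one \<delta>_one identity_S identity_T)
qed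

theorem is_solution_B:
  assumes "is_solution (assoc_map addS multS oneS)" and "is_solution (assoc_map addT multT oneT)"
    and "\<And>a u. addT (\<delta> a oneT) u = addT oneT u"
  shows "is_solution (assoc_map addB multB (oneS, oneT))"
proof -
  interpret B: semibrace addB multB "(oneS, oneT)"
    by (rule semibrace.intro) (rule left_semi_brace_B)
  show ?thesis
    using assms one_add_mult_one_add_B
    unfolding S.is_solution_iff T.is_solution_iff B.is_solution_iff by blast
qed

end

theorem theorem43:
  fixes addS multS :: "'a \<Rightarrow> 'a \<Rightarrow> 'a" and oneS :: 'a
    and addT multT :: "'b \<Rightarrow> 'b \<Rightarrow> 'b" and oneT :: 'b
    and \<sigma> :: "'b \<Rightarrow> 'a \<Rightarrow> 'a" and \<delta> :: "'a \<Rightarrow> 'b \<Rightarrow> 'b"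
  assumes S: "left_semi_brace addS multS oneS"
    and T: "left_semi_brace addT multT oneT"
    and solS: "is_solution (assoc_map addS multS oneS)"
    and solT: "is_solution (assoc_map addT multT oneT)"
    and \<sigma>_aut: "\<forall>u. bij (\<sigma> u) \<and> (\<forall>a b. \<sigma> u (addS a b) = addS (\<sigma> u a) (\<sigma> u b))
                        \<and> (\<forall>a b. \<sigma> u (multS a b) = multS (\<sigma> u a) (\<sigma> u b))"
    and \<sigma>_hom: "\<forall>u v. \<sigma> (multT u v) = \<sigma> u \<circ> \<sigma> v"
    and \<delta>_end: "\<forall>a u v. \<delta> a (addT u v) = addT (\<delta> a u) (\<delta> a v)"
    and \<delta>_antihom: "\<forall>a b u. \<delta> (addS a b) u = \<delta> b (\<delta> a u)"
    and compat: "\<forall>a b u v w.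
        addT (\<delta> (lam addS multS oneS a (\<sigma> u b)) (multT u v))
             (multT u (addT (\<delta> b (ginv multT oneT u)) w))
        = multT u (addT (\<delta> b v) w)"
    and cond1: "\<forall>a u. \<delta> a (\<delta> oneS u) = \<delta> a u"
    and cond2: "\<forall>a u. addT (\<delta> a oneT) u = addT oneT u"
  shows "is_solution (assoc_map (dsp_add addS addT \<delta>) (dsp_mult multS multT \<sigma>) (oneS, oneT))"
proof -
  interpret double_semidirect_product addS multS oneS addT multT oneT \<sigma> \<delta>
    using S T \<sigma>_aut \<sigma>_hom \<delta>_end \<delta>_antihom compat
    by (simp add: double_semidirect_product_def double_semidirect_product_axioms_def semibrace_def)
  show ?thesis
    using solS solT cond2 by (simp add: is_solution_B)
qed

end
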